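(* Let $n\ge1$, $k=\lfloor n/2\rfloor$, and let $(p_j,u_j)$, $0\le j\le n$, be the coordinates of the trajectory $T_n$. Then $$C_n=2\sum_{j=0}^{k-1}\bigl(3-2p_j-p_ju_j\bigr)+p_k^2.$$
   Context: For $n\ge1$ and $\mathbf{x}=(x_1,\dots,x_n)\in(0,\infty)^n$ let $f_n(\mathbf{x})=\sum_{i=1}^n x_i+\sum_{1\le i\le j\le n}\prod_{k=i}^j \frac1{x_k}$, $A_n=\inf_{\mathbf{x}\in(0,\infty)^n} f_n(\mathbf{x})$, and $C_n=3n-A_n$. Let $\Phi$ be the partial map of $\mathbb{R}^2$ defined for $p\ne0$ by $\Phi(p,u)=\bigl(p^2(u+1)-1,\ 1/p\bigr)$. For $n\ge1$, the trajectory $T_n$ is the (existing and unique) finite sequence $(p_j,u_j)$, $j=0,\dots,n$, with $(p_j,u_j)=\Phi(p_{j-1},u_{j-1})$ for $1\le j\le n$, $u_0=0$, $p_n=0$, and $p_j>0$ for $0\le j\le n-1$. *)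

theory Defs
  imports Complex_Main
begin

definition f_n :: "nat \<Rightarrow> (nat \<Rightarrow> real) \<Rightarrow> real" where
  "f_n n x = (\<Sum>i=1..n. x i) + (\<Sum>i=1..n. \<Sum>j=i..n. \<Prod>k=i..j. 1 / x k)"

definition A_n :: "nat \<Rightarrow> real" where
  "A_n n = Inf (f_n n ` {x. \<forall>i\<in>{1..n}. x i > 0})"

definition C_n :: "nat \<Rightarrow> real" where
  "C_n n = 3 * real n - A_n n"

definition Phi :: "real \<Rightarrow> real \<Rightarrow> real \<times> real" where
  "Phi p u = (p\<^sup>2 * (u + 1) - 1, 1 / p)"

definition is_trajectory :: "nat \<Rightarrow> (nat \<Rightarrow> real) \<Rightarrow> (nat \<Rightarrow> real) \<Rightarrow> bool" where
  "is_trajectory n p u \<longleftrightarrow>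
     u 0 = 0 \<and> p n = 0 \<and> (\<forall>j<n. p j > 0) \<and>
     (\<forall>j\<in>{1..n}. p (j - 1) \<noteq> 0 \<and> (p j, u j) = Phi (p (j - 1)) (u (j - 1)))"

end

theory Submission
  imports Defs
begin

(*
  Write P i j = 1 / (x_i * ... * x_j). Along T_n, at the point x_k = p_(k-1) (1 + u_(k-1)),
  the map Phi makes u_k = sum_(i<=k) P i k and p_k = sum_(j>k) P (k+1) j, and the relation
  x_k = u_k (1 + p_k) is exactly the vanishing of x_k * df_n/dx_k. In the variables ln x_k,
  f_n is a sum of exponentials of linear forms, hence convex, so x is the unique minimiser and
  A_n = f_n x = sum_k (x_k + u_k). The reversed sequence (u_(n-j), p_(n-j)) is again a
  trajectory and yields a minimiser too; by uniqueness both points coincide, which gives the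
  symmetry p_j = u_(n-j). Telescoping with p_j u_j and folding the sum at its middle then turns
  3 n - A_n into the stated formula.
*)

lemma sum_upper_triangle_swap:
  fixes g :: "nat \<Rightarrow> nat \<Rightarrow> 'a::comm_monoid_add"
  shows "(\<Sum>i=m..n. \<Sum>j=i..n. g i j) = (\<Sum>j=m..n. \<Sum>i=m..j. g i j)"
proof -
  have "(\<Sum>i=m..n. \<Sum>j=i..n. g i j) = (\<Sum>i=m..n. \<Sum>j\<in>{j\<in>{m..n}. i \<le> j}. g i j)"
    by (intro sum.cong) auto
  also have "\<dots> = (\<Sum>j=m..n. \<Sum>i\<in>{i\<in>{m..n}. i \<le> j}. g i j)"
    by (rule sum.swap_restrict) simp_all
  also have "\<dots> = (\<Sum>j=m..n. \<Sum>i=m..j. g i j)"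
    by (intro sum.cong) auto
  finally show ?thesis .
qed

lemma sum_upper_triangle_swap3:
  fixes g :: "nat \<Rightarrow> nat \<Rightarrow> nat \<Rightarrow> 'a::comm_monoid_add"
  shows "(\<Sum>i=m..n. \<Sum>j=i..n. \<Sum>k=i..j. g i j k) = (\<Sum>k=m..n. \<Sum>i=m..k. \<Sum>j=k..n. g i j k)"
proof -
  have inner: "(\<Sum>j=i..n. \<Sum>k=i..j. g i j k) = (\<Sum>k=i..n. \<Sum>j=k..n. g i j k)" for i
    using sum_upper_triangle_swap[where g="\<lambda>k j. g i j k" and m=i and n=n] by simp
  have "(\<Sum>i=m..n. \<Sum>j=i..n. \<Sum>k=i..j. g i j k) = (\<Sum>i=m..n. \<Sum>k=i..n. \<Sum>j=k..n. g i j k)"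
    by (simp only: inner)
  also have "\<dots> = (\<Sum>k=m..n. \<Sum>i=m..k. \<Sum>j=k..n. g i j k)"
    by (rule sum_upper_triangle_swap)
  finally show ?thesis .
qed

definition tangent_gap :: "real \<Rightarrow> real \<Rightarrow> real" where
  "tangent_gap a t = t - a - a * ln (t / a)"

lemma tangent_gap_nonneg:
  assumes "0 < a" "0 < t"
  shows "0 \<le> tangent_gap a t"
proof -
  have "a * ln (t / a) \<le> a * (t / a - 1)"
    using assms by (intro mult_left_mono ln_le_minus_one) auto
  also have "\<dots> = t - a"
    using assms by (simp add: field_simps)
  finally show ?thesis
    by (simp add: tangent_gap_def)
qed

lemma tangent_gap_eq_0_iff:
  assumes "0 < a" "0 < t"
  shows "tangent_gap a t = 0 \<longleftrightarrow> t = a"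
proof
  assume "tangent_gap a t = 0"
  then have "ln (t / a) = t / a - 1"
    using assms by (simp add: tangent_gap_def field_simps)
  then have "t / a = 1"
    using assms by (intro ln_eq_minus_one) auto
  then show "t = a"
    using assms by simp
qed (simp add: tangent_gap_def)

definition head_sum :: "(nat \<Rightarrow> real) \<Rightarrow> nat \<Rightarrow> real" where
  "head_sum x k = (\<Sum>i=1..k. \<Prod>m=i..k. 1 / x m)"

definition tail_sum :: "nat \<Rightarrow> (nat \<Rightarrow> real) \<Rightarrow> nat \<Rightarrow> real" where
  "tail_sum n x k = (\<Sum>j=Suc k..n. \<Prod>m=Suc k..j. 1 / x m)"

lemma head_sum_0 [simp]: "head_sum x 0 = 0"
  by (simp add: head_sum_def)

lemma head_sum_Suc: "head_sum x (Suc k) = (1 + head_sum x k) / x (Suc k)"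
proof -
  have "head_sum x (Suc k) = (\<Sum>i=1..k. (\<Prod>m=i..k. 1 / x m) / x (Suc k)) + 1 / x (Suc k)"
    unfolding head_sum_def by (simp add: prod.cl_ivl_Suc)
  then show ?thesis
    by (simp add: head_sum_def sum_divide_distrib add_divide_distrib)
qed

lemma tail_sum_self [simp]: "tail_sum n x n = 0"
  by (simp add: tail_sum_def)

lemma tail_sum_Suc:
  assumes "k < n"
  shows "tail_sum n x k = (1 + tail_sum n x (Suc k)) / x (Suc k)"
proof -
  have "tail_sum n x k = 1 / x (Suc k) + (\<Sum>j=Suc (Suc k)..n. (\<Prod>m=Suc (Suc k)..j. 1 / x m) / x (Suc k))"
    unfolding tail_sum_def using assms
    by (simp add: sum.atLeast_Suc_atMost prod.atLeast_Suc_atMost)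
  then show ?thesis
    by (simp add: tail_sum_def sum_divide_distrib add_divide_distrib)
qed

lemma sum_chain_products_through:
  assumes "k \<le> n"
  shows "(\<Sum>i=1..k. \<Sum>j=k..n. \<Prod>m=i..j. 1 / x m) = head_sum x k * (1 + tail_sum n x k)"
proof -
  have tail: "(\<Sum>j=k..n. \<Prod>m=Suc k..j. 1 / x m) = 1 + tail_sum n x k"
    unfolding tail_sum_def using assms by (simp add: sum.atLeast_Suc_atMost)
  have "head_sum x k * (1 + tail_sum n x k)
      = (\<Sum>i=1..k. \<Sum>j=k..n. (\<Prod>m=i..k. 1 / x m) * (\<Prod>m=Suc k..j. 1 / x m))"
    by (simp only: head_sum_def tail[symmetric] sum_product)
  also have "\<dots> = (\<Sum>i=1..k. \<Sum>j=k..n. \<Prod>m=i..j. 1 / x m)"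
  proof (intro sum.cong refl)
    fix i j assume "i \<in> {1..k}" "j \<in> {k..n}"
    then show "(\<Prod>m=i..k. 1 / x m) * (\<Prod>m=Suc k..j. 1 / x m) = (\<Prod>m=i..j. 1 / x m)"
      using prod.ub_add_nat[of i k "\<lambda>m. 1 / x m" "j - k"] by simp
  qed
  finally show ?thesis ..
qed

lemma f_n_eq_sum_head_sum: "f_n n x = (\<Sum>k=1..n. x k + head_sum x k)"
  unfolding f_n_def head_sum_def sum_upper_triangle_swap by (simp add: sum.distrib)

lemma ln_chain_product_ratio:
  fixes x y :: "nat \<Rightarrow> real"
  assumes "\<forall>k\<in>{i..j}. 0 < x k" "\<forall>k\<in>{i..j}. 0 < y k"
  shows "ln ((\<Prod>m=i..j. 1 / y m) / (\<Prod>m=i..j. 1 / x m)) = - (\<Sum>k=i..j. ln (y k / x k))"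
proof -
  have "(\<Prod>m=i..j. 1 / y m) / (\<Prod>m=i..j. 1 / x m) = (\<Prod>k=i..j. x k / y k)"
    by (simp add: prod_dividef)
  also have "ln \<dots> = (\<Sum>k=i..j. ln (x k / y k))"
    using assms by (intro ln_prod) force+
  also have "\<dots> = (\<Sum>k=i..j. - ln (y k / x k))"
    using assms by (intro sum.cong refl) (simp add: ln_div)
  finally show ?thesis
    by (simp add: sum_negf)
qed

lemma sum_chain_products_weighted_at_critical:
  assumes critical: "\<forall>k\<in>{1..n}. x k = head_sum x k * (1 + tail_sum n x k)"
  shows "(\<Sum>i=1..n. \<Sum>j=i..n. (\<Prod>m=i..j. 1 / x m) * (\<Sum>k=i..j. d k)) = (\<Sum>k=1..n. x k * d k)"
proof -
  have "(\<Sum>i=1..n. \<Sum>j=i..n. (\<Prod>m=i..j. 1 / x m) * (\<Sum>k=i..j. d k))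
      = (\<Sum>k=1..n. (\<Sum>i=1..k. \<Sum>j=k..n. \<Prod>m=i..j. 1 / x m) * d k)"
    unfolding sum_distrib_left sum_distrib_right sum_upper_triangle_swap3 ..
  also have "\<dots> = (\<Sum>k=1..n. x k * d k)"
  proof (intro sum.cong refl)
    fix k assume k: "k \<in> {1..n}"
    then have "(\<Sum>i=1..k. \<Sum>j=k..n. \<Prod>m=i..j. 1 / x m) = head_sum x k * (1 + tail_sum n x k)"
      by (intro sum_chain_products_through) simp
    also have "\<dots> = x k"
      using critical k by simp
    finally show "(\<Sum>i=1..k. \<Sum>j=k..n. \<Prod>m=i..j. 1 / x m) * d k = x k * d k"
      by simp
  qed
  finally show ?thesis .
qed

(* Each monomial of f_n lies above its tangent in the variables ln y_k at ln x_k; at a critical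
   point the linear parts of these tangents cancel. *)
lemma f_n_excess_at_critical:
  assumes x_pos: "\<forall>k\<in>{1..n}. 0 < x k" and y_pos: "\<forall>k\<in>{1..n}. 0 < y k"
    and critical: "\<forall>k\<in>{1..n}. x k = head_sum x k * (1 + tail_sum n x k)"
  shows "f_n n y - f_n n x = (\<Sum>k=1..n. tangent_gap (x k) (y k))
           + (\<Sum>i=1..n. \<Sum>j=i..n. tangent_gap (\<Prod>m=i..j. 1 / x m) (\<Prod>m=i..j. 1 / y m))"
proof -
  define d where "d k = ln (y k / x k)" for k
  define P where "P z i j = (\<Prod>m=i..j. 1 / z m)" for z :: "nat \<Rightarrow> real" and i j
  have "(\<Sum>i=1..n. \<Sum>j=i..n. tangent_gap (P x i j) (P y i j))
      = (\<Sum>i=1..n. \<Sum>j=i..n. P y i j - P x i j + P x i j * (\<Sum>k=i..j. d k))"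
  proof (intro sum.cong refl)
    fix i j assume "i \<in> {1..n}" "j \<in> {i..n}"
    then have "ln (P y i j / P x i j) = - (\<Sum>k=i..j. d k)"
      unfolding P_def d_def using x_pos y_pos by (intro ln_chain_product_ratio) auto
    then show "tangent_gap (P x i j) (P y i j) = P y i j - P x i j + P x i j * (\<Sum>k=i..j. d k)"
      by (simp add: tangent_gap_def)
  qed
  also have "\<dots> = (\<Sum>i=1..n. \<Sum>j=i..n. P y i j) - (\<Sum>i=1..n. \<Sum>j=i..n. P x i j) + (\<Sum>k=1..n. x k * d k)"
    unfolding sum.distrib sum_subtractf P_def sum_chain_products_weighted_at_critical[OF critical] ..
  finally have chain_gaps: "(\<Sum>i=1..n. \<Sum>j=i..n. tangent_gap (P x i j) (P y i j))
      = (\<Sum>i=1..n. \<Sum>j=i..n. P y i j) - (\<Sum>i=1..n. \<Sum>j=i..n. P x i j) + (\<Sum>k=1..n. x k * d k)" .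
  have point_gaps: "(\<Sum>k=1..n. tangent_gap (x k) (y k))
      = (\<Sum>k=1..n. y k) - (\<Sum>k=1..n. x k) - (\<Sum>k=1..n. x k * d k)"
    by (simp only: tangent_gap_def d_def sum_subtractf)
  have "f_n n y - f_n n x = (\<Sum>k=1..n. tangent_gap (x k) (y k))
      + (\<Sum>i=1..n. \<Sum>j=i..n. tangent_gap (P x i j) (P y i j))"
    unfolding f_n_def P_def[symmetric] chain_gaps point_gaps by simp
  then show ?thesis
    by (simp only: P_def)
qed

lemma f_n_min_at_critical:
  assumes x_pos: "\<forall>k\<in>{1..n}. 0 < x k" and y_pos: "\<forall>k\<in>{1..n}. 0 < y k"
    and critical: "\<forall>k\<in>{1..n}. x k = head_sum x k * (1 + tail_sum n x k)"
  shows "f_n n x \<le> f_n n y"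
    and "f_n n y = f_n n x \<Longrightarrow> \<forall>k\<in>{1..n}. y k = x k"
proof -
  have chain_pos: "0 < (\<Prod>m=i..j. 1 / z m)"
    if "\<forall>k\<in>{1..n}. 0 < z k" "1 \<le> i" "j \<le> n" for z :: "nat \<Rightarrow> real" and i j
    using that by (intro prod_pos) auto
  have point_gaps: "0 \<le> (\<Sum>k=1..n. tangent_gap (x k) (y k))"
    using x_pos y_pos by (intro sum_nonneg tangent_gap_nonneg) auto
  have chain_gaps: "0 \<le> (\<Sum>i=1..n. \<Sum>j=i..n. tangent_gap (\<Prod>m=i..j. 1 / x m) (\<Prod>m=i..j. 1 / y m))"
    using x_pos y_pos by (intro sum_nonneg tangent_gap_nonneg chain_pos) auto
  note excess = f_n_excess_at_critical[OF x_pos y_pos critical]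
  show "f_n n x \<le> f_n n y"
    using excess point_gaps chain_gaps by linarith
  assume "f_n n y = f_n n x"
  then have "(\<Sum>k=1..n. tangent_gap (x k) (y k)) = 0"
    using excess point_gaps chain_gaps by linarith
  then show "\<forall>k\<in>{1..n}. y k = x k"
    using x_pos y_pos
    by (subst (asm) sum_nonneg_eq_0_iff) (auto simp: tangent_gap_nonneg tangent_gap_eq_0_iff)
qed

definition traj_point :: "(nat \<Rightarrow> real) \<Rightarrow> (nat \<Rightarrow> real) \<Rightarrow> nat \<Rightarrow> real" where
  "traj_point p u k = p (k - 1) * (1 + u (k - 1))"

lemma trajectory_stepD:
  assumes "is_trajectory n p u" "j < n"
  shows "0 < p j" "u (Suc j) = 1 / p j" "p (Suc j) = (p j)\<^sup>2 * (u j + 1) - 1"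
  using assms unfolding is_trajectory_def Phi_def by (auto dest!: bspec[of _ _ "Suc j"])

lemma trajectory_u_nonneg:
  assumes "is_trajectory n p u" "j \<le> n"
  shows "0 \<le> u j"
proof (cases j)
  case 0
  then show ?thesis using assms(1) by (simp add: is_trajectory_def)
next
  case (Suc i)
  then show ?thesis using trajectory_stepD[OF assms(1), of i] assms(2) by simp
qed

lemma traj_point_pos:
  assumes "is_trajectory n p u" "k \<in> {1..n}"
  shows "0 < traj_point p u k"
proof -
  have "0 < p (k - 1)" "0 \<le> u (k - 1)"
    using assms trajectory_stepD(1)[OF assms(1), of "k - 1"] trajectory_u_nonneg[OF assms(1), of "k - 1"]
    by auto
  then show ?thesis
    by (simp add: traj_point_def)
qed

lemma traj_point_Suc:
  assumes "is_trajectory n p u" "j < n"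
  shows "traj_point p u (Suc j) = u (Suc j) * (1 + p (Suc j))"
  using trajectory_stepD[OF assms]
  by (simp add: traj_point_def field_simps power2_eq_square)

lemma trajectory_u_eq_head_sum:
  assumes "is_trajectory n p u" "j \<le> n"
  shows "u j = head_sum (traj_point p u) j"
  using assms(2)
proof (induction j)
  case 0
  then show ?case using assms(1) by (simp add: is_trajectory_def)
next
  case (Suc j)
  have "0 < p j" "u (Suc j) = 1 / p j" "0 \<le> u j"
    using Suc.prems trajectory_stepD[OF assms(1), of j] trajectory_u_nonneg[OF assms(1), of j] by auto
  then have "u (Suc j) = (1 + u j) / traj_point p u (Suc j)"
    by (simp add: traj_point_def)
  then show ?case
    using Suc by (simp add: head_sum_Suc)
qed

lemma trajectory_p_eq_tail_sum:
  assumes "is_trajectory n p u" "j \<le> n"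
  shows "p j = tail_sum n (traj_point p u) j"
  using assms(2)
proof (induction j rule: inc_induct)
  case base
  then show ?case using assms(1) by (simp add: is_trajectory_def)
next
  case (step j)
  have "1 + p (Suc j) = p j * traj_point p u (Suc j)"
    using trajectory_stepD(3)[OF assms(1) step.hyps(2)]
    by (simp add: traj_point_def power2_eq_square algebra_simps)
  moreover have "0 < traj_point p u (Suc j)"
    using traj_point_pos[OF assms(1)] step.hyps by simp
  ultimately have "p j = (1 + p (Suc j)) / traj_point p u (Suc j)"
    by simp
  then show ?case
    using step by (simp add: tail_sum_Suc)
qed

lemma traj_point_critical:
  assumes "is_trajectory n p u" "k \<in> {1..n}"
  shows "traj_point p u k = head_sum (traj_point p u) k * (1 + tail_sum n (traj_point p u) k)"
proof -
  obtain j where j: "k = Suc j" "j < n"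
    using assms(2) by (cases k) auto
  show ?thesis
    using traj_point_Suc[OF assms(1) j(2)] j assms(1)
    by (simp add: trajectory_u_eq_head_sum trajectory_p_eq_tail_sum)
qed

lemma A_n_trajectory:
  assumes "is_trajectory n p u"
  shows "A_n n = f_n n (traj_point p u)"
  unfolding A_n_def
proof (rule cInf_eq_minimum)
  show "f_n n (traj_point p u) \<in> f_n n ` {x. \<forall>i\<in>{1..n}. 0 < x i}"
    using traj_point_pos[OF assms] by blast
next
  fix z assume "z \<in> f_n n ` {x. \<forall>i\<in>{1..n}. 0 < x i}"
  then obtain y where y_pos: "\<forall>k\<in>{1..n}. 0 < y k" and z: "z = f_n n y"
    by blast
  show "f_n n (traj_point p u) \<le> z"
    unfolding z using traj_point_pos[OF assms] traj_point_critical[OF assms] y_pos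
    by (intro f_n_min_at_critical(1)) auto
qed

lemma is_trajectory_reverse:
  assumes "is_trajectory n p u"
  shows "is_trajectory n (\<lambda>j. u (n - j)) (\<lambda>j. p (n - j))"
  unfolding is_trajectory_def
proof (intro conjI ballI allI impI)
  fix j assume "j \<in> {1..n}"
  then have m: "n - (j - 1) = Suc (n - j)" "n - j < n"
    by auto
  note step = trajectory_stepD[OF assms m(2)]
  show "u (n - (j - 1)) \<noteq> 0"
    unfolding m(1) step(2) using step(1) by simp
  show "(u (n - j), p (n - j)) = Phi (u (n - (j - 1))) (p (n - (j - 1)))"
    unfolding m(1) Phi_def step(2,3) using step(1) by (simp add: field_simps power2_eq_square)
next
  fix j assume "j < n"
  then show "0 < u (n - j)"
    using trajectory_stepD(2)[OF assms, of "n - Suc j"] trajectory_stepD(1)[OF assms, of "n - Suc j"]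
    by (simp add: Suc_diff_Suc)
qed (use assms in \<open>simp_all add: is_trajectory_def\<close>)

lemma trajectory_self_reverse:
  assumes T: "is_trajectory n p u" and "j \<le> n"
  shows "p j = u (n - j)"
proof -
  let ?x = "traj_point p u"
  let ?x' = "traj_point (\<lambda>j. u (n - j)) (\<lambda>j. p (n - j))"
  note T' = is_trajectory_reverse[OF T]
  have x_pos: "\<forall>k\<in>{1..n}. 0 < ?x k" and x'_pos: "\<forall>k\<in>{1..n}. 0 < ?x' k"
    using traj_point_pos[OF T] traj_point_pos[OF T'] by blast+
  have critical: "\<forall>k\<in>{1..n}. ?x k = head_sum ?x k * (1 + tail_sum n ?x k)"
    using traj_point_critical[OF T] by blast
  have "f_n n ?x' = f_n n ?x"
    using A_n_trajectory[OF T] A_n_trajectory[OF T'] by simp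
  then have same: "\<forall>k\<in>{1..n}. ?x' k = ?x k"
    using f_n_min_at_critical(2)[OF x_pos x'_pos critical] by blast
  have "u (n - j) = tail_sum n ?x' j"
    using trajectory_p_eq_tail_sum[OF T' \<open>j \<le> n\<close>] by simp
  also have "\<dots> = tail_sum n ?x j"
    unfolding tail_sum_def using same by (intro sum.cong prod.cong refl) auto
  also have "\<dots> = p j"
    using trajectory_p_eq_tail_sum[OF T \<open>j \<le> n\<close>] by simp
  finally show ?thesis ..
qed

lemma C_n_trajectory:
  assumes "is_trajectory n p u"
  shows "C_n n = (\<Sum>j<n. 3 - traj_point p u (Suc j) - u (Suc j))"
proof -
  have "A_n n = (\<Sum>k=1..n. traj_point p u k + u k)"
    unfolding A_n_trajectory[OF assms] f_n_eq_sum_head_sum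
    using trajectory_u_eq_head_sum[OF assms] by (intro sum.cong refl) simp
  then show ?thesis
    by (simp add: C_n_def sum.atLeast1_atMost_eq sum_subtractf sum.distrib)
qed

lemma trajectory_sum_telescope:
  assumes "is_trajectory n p u" "m \<le> n"
  shows "(\<Sum>j<m. 3 - traj_point p u (Suc j) - u (Suc j))
    = (\<Sum>j<m. 3 - 2 * p j - p j * u j) + p m * u m"
  using assms(2)
proof (induction m)
  case 0
  then show ?case using assms(1) by (simp add: is_trajectory_def)
next
  case (Suc m)
  then have "m < n" by simp
  note step = trajectory_stepD[OF assms(1) this]
  have "3 - traj_point p u (Suc m) - u (Suc m)
      = (3 - 2 * p m - p m * u m) + p (Suc m) * u (Suc m) - p m * u m"
    using step(1) unfolding traj_point_def step(2,3) by (simp add: field_simps power2_eq_square)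
  then show ?case
    using Suc by simp
qed

lemma trajectory_summand_reflect:
  assumes T: "is_trajectory n p u" and "j < n"
  shows "3 - traj_point p u (n - j) - u (n - j) = 3 - 2 * p j - p j * u j"
proof -
  have "traj_point p u (n - j) = p (n - Suc j) * (1 + u (n - Suc j))"
    by (simp add: traj_point_def)
  also have "\<dots> = u (Suc j) * (1 + p (Suc j))"
    using trajectory_self_reverse[OF T, of "n - Suc j"] trajectory_self_reverse[OF T, of "Suc j"] \<open>j < n\<close>
    by simp
  also have "\<dots> = p j * (1 + u j)"
    using traj_point_Suc[OF T \<open>j < n\<close>] by (simp add: traj_point_def)
  finally show ?thesis
    using trajectory_self_reverse[OF T, of j] \<open>j < n\<close> by (simp add: algebra_simps)
qed

lemma trajectory_sum_to_middle:
  assumes T: "is_trajectory n p u"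
  defines "k \<equiv> n div 2"
  shows "(\<Sum>j<n - k. 3 - traj_point p u (Suc j) - u (Suc j))
    = (\<Sum>j<k. 3 - 2 * p j - p j * u j) + (p k)\<^sup>2"
proof (cases "even n")
  case True
  then have "n - k = k" "k \<le> n"
    by (auto simp: k_def)
  then show ?thesis
    using trajectory_sum_telescope[OF T, of k] trajectory_self_reverse[OF T, of k]
    by (simp add: power2_eq_square)
next
  case False
  then have nk: "n - k = Suc k" "k < n" "n - Suc k = k"
    by (auto simp: k_def elim!: oddE)
  note step = trajectory_stepD[OF T nk(2)]
  have "p k = 1 / p k"
    using trajectory_self_reverse[OF T, of k] step(2) nk by simp
  then have "p k = 1"
    using step(1) by (auto simp: field_simps power2_eq_1_iff simp flip: power2_eq_square)
  then show ?thesis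
    using trajectory_sum_telescope[OF T, of "Suc k"] trajectory_self_reverse[OF T, of "Suc k"] step(2) nk
    by simp
qed

theorem lemma8:
  fixes n :: nat and p u :: "nat \<Rightarrow> real"
  assumes "n \<ge> 1"
    and "is_trajectory n p u"
  shows "C_n n = 2 * (\<Sum>j<n div 2. 3 - 2 * p j - p j * u j) + (p (n div 2))\<^sup>2"
proof -
  note T = assms(2)
  define k where "k = n div 2"
  define a where "a j = 3 - 2 * p j - p j * u j" for j
  define b where "b j = 3 - traj_point p u (Suc j) - u (Suc j)" for j
  have "p n = 0"
    using T by (simp add: is_trajectory_def)
  then have "C_n n = (\<Sum>j<n. a j)"
    using C_n_trajectory[OF T] trajectory_sum_telescope[OF T, of n] by (simp add: a_def)
  also have "\<dots> = (\<Sum>j<k. a j) + (\<Sum>j=k..<n. a j)"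
    by (simp add: k_def atLeast0LessThan[symmetric] sum.atLeastLessThan_concat)
  also have "(\<Sum>j=k..<n. a j) = (\<Sum>i<n - k. b i)"
  proof (rule sum.reindex_bij_witness[where i="\<lambda>i. n - Suc i" and j="\<lambda>j. n - Suc j"])
    fix j assume "j \<in> {k..<n}"
    then show "b (n - Suc j) = a j"
      using trajectory_summand_reflect[OF T, of j] by (simp add: a_def b_def Suc_diff_Suc)
  qed auto
  also have "\<dots> = (\<Sum>j<k. a j) + (p k)\<^sup>2"
    using trajectory_sum_to_middle[OF T] by (simp add: a_def b_def k_def)
  finally show ?thesis
    by (simp add: a_def k_def)
qed

end
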